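(* Let $X\subset\mathbb{R}^n$ be closed and $\bar x\in X$. If $X$ is nearly radial at $\bar x$, then $X$ is $1$-peaceful at $\bar x$. Conversely, if $X$ is Clarke regular (i.e. $N_X(y)=\hat N_X(y)$) at every point $y\in X$ in a neighbourhood of $\bar x$ and $X$ is $1$-peaceful at $\bar x$, then $X$ is nearly radial at $\bar x$.
   Context: $\mathbb{B}$ is the closed unit ball, $\mathbb{B}_\epsilon(x)$ the closed ball of radius $\epsilon$ about $x$. The (Bouligand) tangent cone is $T_X(x)=\{\lim t_r^{-1}(x_r-x): t_r\downarrow0,\ x_r\to x,\ x_r\in X\}$. $X$ is nearly radial at $\bar x$ if $\operatorname{dist}(\bar x,x+T_X(x))/|x-\bar x|\to0$ as $x\to\bar x$, $x\in X$, $x\neq\bar x$ (equivalently, as stated in the paper, $\operatorname{dist}(\bar x, x+T_X(x))\to 0$ in the scale-invariant sense used there; we use the normalized form). Regular normals: $v\in\hat N_X(y)$ iff $\langle v,x-y\rangle\le o(|x-y|)$ for $x\in X$; normals: $v\in N_X(y)$ iff there are $y^\nu\to y$ in $X$ and $v^\nu\to v$ with $v^\nu\in\hat N_X(y^\nu)$. Pompeiu–Hausdorff distance: $\mathbf d(C,D)=\inf\{\eta\ge0:C\subset D+\eta\mathbb{B},D\subset C+\eta\mathbb{B}\}$. For set-valued $S$ on domain $Y$, $\operatorname{lip}S(\bar y):=\limsup_{y,y'\to\bar y,\,y,y'\in Y,\,y\ne y'}\frac{\mathbf d(S(y'),S(y))}{|y'-y|}$. Let $\Phi_\epsilon:X\rightrightarrows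 X$ and $\tilde\Phi_\epsilon:\mathbb{R}^n\rightrightarrows X$ both be given by $x\mapsto\mathbb{B}_\epsilon(x)\cap X$. $X$ is $1$-peaceful at $\bar x$ if $\operatorname{lip}\Phi_\epsilon(\bar x)<\infty$ for all small $\epsilon>0$ and $\limsup_{\epsilon\downarrow0}\operatorname{lip}\tilde\Phi_\epsilon(\bar x)\le1$. *)

theory Defs
  imports "HOL-Analysis.Analysis" "HOL-Library.Liminf_Limsup"
begin

definition tangent_cone :: "'a::euclidean_space set \<Rightarrow> 'a \<Rightarrow> 'a set" where
  "tangent_cone X x = {v. \<exists>t xs. (\<forall>r. t r > 0) \<and> t \<longlonglongrightarrow> 0 \<and>
      (\<forall>r. xs r \<in> X) \<and> xs \<longlonglongrightarrow> x \<and> (\<lambda>r. (1 / t r) *\<^sub>R (xs r - x)) \<longlonglongrightarrow> v}"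

definition nearly_radial :: "'a::euclidean_space set \<Rightarrow> 'a \<Rightarrow> bool" where
  "nearly_radial X xb \<longleftrightarrow>
     ((\<lambda>x. infdist xb ((+) x ` tangent_cone X x) / norm (x - xb)) \<longlongrightarrow> 0) (at xb within X)"

definition regular_normal_cone :: "'a::euclidean_space set \<Rightarrow> 'a \<Rightarrow> 'a set" where
  "regular_normal_cone X y = {v. \<forall>e>0. \<exists>d>0. \<forall>x\<in>X. norm (x - y) < d \<longrightarrow>
      inner v (x - y) \<le> e * norm (x - y)}"

definition normal_cone :: "'a::euclidean_space set \<Rightarrow> 'a \<Rightarrow> 'a set" where
  "normal_cone X y = {v. \<exists>ys vs. (\<forall>k. ys k \<in> X) \<and> ys \<longlonglongrightarrow> y \<and> vs \<longlonglongrightarrow> v \<and>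
      (\<forall>k. vs k \<in> regular_normal_cone X (ys k))}"

text \<open>Pompeiu-Hausdorff distance (extended-real valued; inf of empty set is \<infinity>).\<close>
definition ph_dist :: "'a::euclidean_space set \<Rightarrow> 'a set \<Rightarrow> ereal" where
  "ph_dist C D = Inf {ereal eta | eta. eta \<ge> 0 \<and>
      C \<subseteq> {d + e | d e. d \<in> D \<and> norm e \<le> eta} \<and> D \<subseteq> {c + e | c e. c \<in> C \<and> norm e \<le> eta}}"

definition lip_mod :: "('a::euclidean_space \<Rightarrow> 'b::euclidean_space set) \<Rightarrow> 'a set \<Rightarrow> 'a \<Rightarrow> ereal" where
  "lip_mod S Y yb = (INF d\<in>{0<..}. SUP p\<in>{(y, y'). y \<in> Y \<and> y' \<in> Y \<and> y \<noteq> y' \<and>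
        dist y yb < d \<and> dist y' yb < d}.
        ph_dist (S (snd p)) (S (fst p)) / ereal (dist (snd p) (fst p)))"

definition Phi :: "'a::euclidean_space set \<Rightarrow> real \<Rightarrow> 'a \<Rightarrow> 'a set" where
  "Phi X e x = cball x e \<inter> X"

definition one_peaceful :: "'a::euclidean_space set \<Rightarrow> 'a \<Rightarrow> bool" where
  "one_peaceful X xb \<longleftrightarrow>
     (\<forall>\<^sub>F e in at_right 0. lip_mod (Phi X e) X xb < \<infinity>) \<and>
     Limsup (at_right 0) (\<lambda>e. lip_mod (Phi X e) UNIV xb) \<le> 1"

end

theory Submission
  imports Defs
begin

text \<open>
  Forward direction.  Fix \<eta> > 0 and g = \<eta>/(1+\<eta>).  Near xb, every x \<in> X has a tangent vector v
  with x + v within (g/8)|x - xb| of xb.  Given y, y' close to xb and z \<in> X \<inter> B_\<epsilon>(y), minimise the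
  penalised distance h(q) = max(|q - y'|, \<epsilon>) + (1-g)|q - z| over X near z.  A minimiser p has
  |p - z| \<le> (1+\<eta>)|y - y'|, and if p were outside B_\<epsilon>(y') the distance to y' could decrease
  along X only at rate \<le> 1-g, whereas the nearly radial tangent vector at p decreases it faster.
  Hence p \<in> B_\<epsilon>(y'), which bounds the Lipschitz modulus of \<Phi>_\<epsilon> by 1+\<eta> for all small \<epsilon>.

  Converse direction.  For x \<in> X near xb take \<epsilon> = |x - xb| and points y on the ray from x
  through xb just beyond xb: the Lipschitz bound yields points of X \<inter> B_\<epsilon>(y) close to x, and
  their difference quotients converge to a tangent vector v with |x - xb + v|^2 \<le> (L^2 - 1)|x - xb|^2.
\<close>

subsection \<open>Pompeiu-Hausdorff distance and Lipschitz modulus\<close>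

lemma ph_dist_le:
  fixes C D :: "'a::euclidean_space set"
  assumes "eta \<ge> 0"
    and "\<forall>c\<in>C. \<exists>d\<in>D. norm (c - d) \<le> eta" and "\<forall>d\<in>D. \<exists>c\<in>C. norm (d - c) \<le> eta"
  shows "ph_dist C D \<le> ereal eta"
proof -
  have "C \<subseteq> {d + e | d e. d \<in> D \<and> norm e \<le> eta}"
  proof
    fix c assume "c \<in> C"
    then obtain d where "d \<in> D" "norm (c - d) \<le> eta" using assms(2) by blast
    then show "c \<in> {d + e | d e. d \<in> D \<and> norm e \<le> eta}"
      by (intro CollectI exI[of _ d] exI[of _ "c - d"]) auto
  qed
  moreover have "D \<subseteq> {c + e | c e. c \<in> C \<and> norm e \<le> eta}"
  proof
    fix d assume "d \<in> D"
    then obtain c where "c \<in> C" "norm (d - c) \<le> eta" using assms(3) by blast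
    then show "d \<in> {c + e | c e. c \<in> C \<and> norm e \<le> eta}"
      by (intro CollectI exI[of _ c] exI[of _ "d - c"]) auto
  qed
  ultimately show ?thesis unfolding ph_dist_def using assms(1)
    by (intro Inf_lower) blast
qed

lemma ph_dist_lessD:
  fixes C D :: "'a::euclidean_space set"
  assumes "ph_dist C D < ereal a"
  shows "\<exists>eta<a. \<forall>c\<in>C. \<exists>d\<in>D. norm (c - d) \<le> eta"
proof -
  from assms obtain eta where eta: "eta < a" "C \<subseteq> {d + e | d e. d \<in> D \<and> norm e \<le> eta}"
    unfolding ph_dist_def Inf_less_iff by auto
  have "\<exists>d\<in>D. norm (c - d) \<le> eta" if "c \<in> C" for c
  proof -
    obtain d e where "c = d + e" "d \<in> D" "norm e \<le> eta" using eta(2) \<open>c \<in> C\<close> by blast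
    then show ?thesis by (intro bexI[of _ d]) auto
  qed
  then show ?thesis using eta(1) by blast
qed

lemma lip_mod_le:
  fixes S :: "'a::euclidean_space \<Rightarrow> 'b::euclidean_space set"
  assumes "d > 0" "L \<ge> 0"
    and "\<And>y y'. y \<in> Y \<Longrightarrow> y' \<in> Y \<Longrightarrow> y \<noteq> y' \<Longrightarrow> dist y yb < d \<Longrightarrow> dist y' yb < d \<Longrightarrow>
        ph_dist (S y') (S y) \<le> ereal (L * dist y' y)"
  shows "lip_mod S Y yb \<le> ereal L"
proof -
  have "(SUP p\<in>{(y, y'). y \<in> Y \<and> y' \<in> Y \<and> y \<noteq> y' \<and> dist y yb < d \<and> dist y' yb < d}.
        ph_dist (S (snd p)) (S (fst p)) / ereal (dist (snd p) (fst p))) \<le> ereal L"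
  proof (rule SUP_least, clarsimp)
    fix y y' assume p: "y \<in> Y" "y' \<in> Y" "y \<noteq> y'" "dist y yb < d" "dist y' yb < d"
    then have "dist y' y > 0" by simp
    then show "ph_dist (S y') (S y) / ereal (dist y' y) \<le> ereal L"
      using assms(3)[OF p] by (cases "ph_dist (S y') (S y)") (auto simp: ereal_divide field_simps)
  qed
  then show ?thesis unfolding lip_mod_def using assms(1)
    by (intro INF_lower2[of d]) auto
qed

lemma lip_mod_lessD:
  fixes S :: "'a::euclidean_space \<Rightarrow> 'b::euclidean_space set"
  assumes "lip_mod S Y yb < ereal L"
  shows "\<exists>d>0. \<forall>y y'. y \<in> Y \<longrightarrow> y' \<in> Y \<longrightarrow> y \<noteq> y' \<longrightarrow> dist y yb < d \<longrightarrow> dist y' yb < d \<longrightarrow>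
        ph_dist (S y') (S y) < ereal (L * dist y' y)"
proof -
  from assms obtain d where d: "d > 0" "(SUP p\<in>{(y, y'). y \<in> Y \<and> y' \<in> Y \<and> y \<noteq> y' \<and>
        dist y yb < d \<and> dist y' yb < d}.
        ph_dist (S (snd p)) (S (fst p)) / ereal (dist (snd p) (fst p))) < ereal L"
    unfolding lip_mod_def INF_less_iff by auto
  have "ph_dist (S y') (S y) < ereal (L * dist y' y)"
    if p: "y \<in> Y" "y' \<in> Y" "y \<noteq> y'" "dist y yb < d" "dist y' yb < d" for y y'
  proof -
    have "ph_dist (S y') (S y) / ereal (dist y' y) < ereal L"
      by (rule order.strict_trans1[OF _ d(2)], rule SUP_upper2[of "(y, y')"]) (use p in auto)
    moreover have "dist y' y > 0" using p by simp
    ultimately show ?thesis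
      by (cases "ph_dist (S y') (S y)") (auto simp: ereal_divide field_simps)
  qed
  then show ?thesis using d(1) by blast
qed

subsection \<open>Nearly radial sets and tangent cones\<close>

lemma nearly_radial_iff:
  "nearly_radial X xb \<longleftrightarrow> (\<forall>c>0. \<exists>r>0. \<forall>x\<in>X. x \<noteq> xb \<and> dist x xb < r \<longrightarrow>
      infdist xb ((+) x ` tangent_cone X x) < c * norm (x - xb))" (is "_ \<longleftrightarrow> ?rhs")
proof -
  have quot: "infdist xb ((+) x ` tangent_cone X x) / norm (x - xb) < c \<longleftrightarrow>
      infdist xb ((+) x ` tangent_cone X x) < c * norm (x - xb)" if "x \<noteq> xb" for x and c :: real
    using that by (simp add: divide_less_eq)
  have "nearly_radial X xb \<longleftrightarrow> (\<forall>c>0. \<forall>\<^sub>F x in at xb within X.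
      infdist xb ((+) x ` tangent_cone X x) / norm (x - xb) < c)"
    unfolding nearly_radial_def tendsto_iff dist_real_def by (simp add: infdist_nonneg)
  also have "\<dots> \<longleftrightarrow> ?rhs"
    unfolding eventually_at by (simp add: quot conj_commute)
  finally show ?thesis .
qed

lemma zero_in_tangent_cone:
  assumes "p \<in> X"
  shows "0 \<in> tangent_cone X p"
  unfolding tangent_cone_def
  by (intro CollectI exI[of _ "\<lambda>r. inverse (real (Suc r))"] exI[of _ "\<lambda>r. p"] conjI allI
      LIMSEQ_inverse_real_of_nat) (use assms in auto)

lemma infdist_lessE:
  assumes "A \<noteq> {}" "infdist x A < b"
  obtains a where "a \<in> A" "dist x a < b"
proof -
  have "(INF a\<in>A. dist x a) < b" using assms unfolding infdist_def by simp
  then show ?thesis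
    using that assms(1) by (subst (asm) cINF_less_iff) (auto intro: bdd_belowI[of _ 0])
qed


lemma tangent_cone_distance_growth:
  fixes X :: "'a::euclidean_space set"
  assumes v: "v \<in> tangent_cone X p" and \<sigma>: "\<sigma> \<ge> 0" and \<rho>: "\<rho> > 0"
    and grow: "\<And>q. q \<in> X \<Longrightarrow> dist q p < \<rho> \<Longrightarrow> norm (p - c) - \<sigma> * norm (q - p) \<le> norm (q - c)"
  shows "- \<sigma> * norm v * norm (p - c) \<le> inner v (p - c)"
proof -
  from v obtain t ps where t: "\<And>k. t k > 0" "t \<longlonglongrightarrow> 0" and ps: "\<And>k. ps k \<in> X" "ps \<longlonglongrightarrow> p"
    and quot: "(\<lambda>k. (1 / t k) *\<^sub>R (ps k - p)) \<longlonglongrightarrow> v"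
    unfolding tangent_cone_def by blast
  define u where "u k = (1 / t k) *\<^sub>R (ps k - p)" for k
  have ps_eq: "ps k = p + t k *\<^sub>R u k" for k using t(1)[of k] unfolding u_def by simp
  have u: "u \<longlonglongrightarrow> v" using quot unfolding u_def[abs_def] .
  text \<open>Expanding |ps_k - c|^2 - |p - c|^2 and dividing by t_k gives a difference quotient
    bounded below by the growth hypothesis.\<close>
  have "\<forall>\<^sub>F k in sequentially. - \<sigma> * norm (u k) * (norm (ps k - c) + norm (p - c))
      \<le> 2 * inner (u k) (p - c) + t k * (norm (u k))\<^sup>2"
    using tendstoD[OF ps(2) \<rho>]
  proof eventually_elim
    case (elim k)
    define F1 where "F1 = norm (ps k - c)"
    define F0 where "F0 = norm (p - c)"
    have step: "norm (ps k - p) = t k * norm (u k)" unfolding ps_eq using t(1)[of k] by simp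
    have "F1 - F0 \<ge> - \<sigma> * norm (ps k - p)"
      using grow[OF ps(1) elim] unfolding F1_def F0_def by simp
    then have "(F1 - F0) * (F1 + F0) \<ge> (- \<sigma> * norm (ps k - p)) * (F1 + F0)"
      unfolding F1_def F0_def by (intro mult_right_mono) auto
    moreover have "F1\<^sup>2 = F0\<^sup>2 + t k * (2 * inner (u k) (p - c) + t k * (norm (u k))\<^sup>2)"
      unfolding F1_def F0_def ps_eq power2_norm_eq_inner
      by (simp add: inner_add_left inner_add_right inner_commute algebra_simps power2_eq_square)
    ultimately have "t k * (- \<sigma> * norm (u k) * (F1 + F0))
        \<le> t k * (2 * inner (u k) (p - c) + t k * (norm (u k))\<^sup>2)"
      unfolding step by (simp add: algebra_simps power2_eq_square)
    then show ?case using t(1)[of k] unfolding F1_def F0_def by (rule mult_left_le_imp_le)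
  qed
  moreover have "(\<lambda>k. - \<sigma> * norm (u k) * (norm (ps k - c) + norm (p - c)))
      \<longlonglongrightarrow> - \<sigma> * norm v * (norm (p - c) + norm (p - c))"
    by (intro tendsto_intros u ps(2))
  moreover have "(\<lambda>k. 2 * inner (u k) (p - c) + t k * (norm (u k))\<^sup>2)
      \<longlonglongrightarrow> 2 * inner v (p - c) + 0 * (norm v)\<^sup>2"
    by (intro tendsto_intros u t(2))
  ultimately have "- \<sigma> * norm v * (norm (p - c) + norm (p - c)) \<le> 2 * inner v (p - c) + 0 * (norm v)\<^sup>2"
    by (intro tendsto_le[OF trivial_limit_sequentially]) auto
  then show ?thesis by (simp add: algebra_simps)
qed

lemma tangent_cone_bounded_quotients:
  fixes X :: "'a::euclidean_space set"
  assumes t: "\<And>k. t k > 0" "t \<longlonglongrightarrow> 0" and z: "\<And>k. z k \<in> X"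
    and bound: "\<And>k. norm (z k - x) \<le> M * t k"
  obtains r v where "strict_mono r" "v \<in> tangent_cone X x"
    "(\<lambda>k. (1 / t (r k)) *\<^sub>R (z (r k) - x)) \<longlonglongrightarrow> v"
proof -
  define q where "q k = (1 / t k) *\<^sub>R (z k - x)" for k
  have "norm (q k) \<le> M" for k
    using bound[of k] t(1)[of k] unfolding q_def by (simp add: divide_le_eq mult.commute)
  then have "bounded (range q)" unfolding bounded_iff by blast
  then obtain r v where r: "strict_mono r" "(q \<circ> r) \<longlonglongrightarrow> v"
    using bounded_imp_convergent_subsequence by blast
  have tr: "(t \<circ> r) \<longlonglongrightarrow> 0" using LIMSEQ_subseq_LIMSEQ[OF t(2) r(1)] .
  have z_eq: "z k = x + t k *\<^sub>R q k" for k using t(1)[of k] unfolding q_def by simp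
  have "(\<lambda>k. x + (t \<circ> r) k *\<^sub>R (q \<circ> r) k) \<longlonglongrightarrow> x + 0 *\<^sub>R v"
    by (intro tendsto_intros tr r(2))
  then have "(z \<circ> r) \<longlonglongrightarrow> x" by (simp add: z_eq comp_def)
  then have "v \<in> tangent_cone X x"
    unfolding tangent_cone_def using t(1) z r(2) tr
    by (intro CollectI exI[of _ "t \<circ> r"] exI[of _ "z \<circ> r"]) (simp add: q_def comp_def)
  moreover have "(\<lambda>k. (1 / t (r k)) *\<^sub>R (z (r k) - x)) \<longlonglongrightarrow> v"
    using r(2) by (simp add: q_def comp_def)
  ultimately show ?thesis using that r(1) by blast
qed


subsection \<open>Nearly radial implies 1-peaceful\<close>

text \<open>The arithmetic core of the descent estimate below: with A = |p - xb|, B = |xb - c| small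
  relative to A, V = |v|, F = |p - c| and I = \<langle>v, p - c\<rangle>, the bounds on I from both sides are
  incompatible.\<close>
lemma radial_descent_arith:
  fixes A B V F I g :: real
  assumes "0 < g" "g < 1" "A > 0" "0 \<le> B" "B \<le> g/8*A" "0 \<le> V" "V \<le> (1+g/8)*A"
    "0 \<le> F" "F \<le> A + B" "I \<le> g/8*A*(A+B) - A\<^sup>2 + A*B" "I \<ge> -(1-g)*V*F"
  shows False
proof -
  have "(1-g)*V*F \<le> (1-g)*((1+g/8)*A)*(A+B)"
    using assms by (intro mult_mono) auto
  then have "A * (g/8*(A+B) - A + B + (1-g)*(1+g/8)*(A+B)) \<ge> 0"
    using assms(10,11) by (simp add: algebra_simps power2_eq_square)
  then have h: "g/8*(A+B) - A + B + (1-g)*(1+g/8)*(A+B) \<ge> 0"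
    using assms(3) by (simp add: zero_le_mult_iff)
  have "(1-g)*(1+g/8) \<le> 1 - 7*g/8" using assms(1) by (simp add: algebra_simps)
  then have "(1-g)*(1+g/8)*(A+B) \<le> (1 - 7*g/8)*(A+B)" using assms by (intro mult_right_mono) auto
  with h have "2*B - 3*g/4*(A+B) \<ge> 0" by (simp add: field_simps)
  moreover have "g*A > 0" "g*B \<ge> 0" using assms by auto
  ultimately show False using assms(5) by (simp add: algebra_simps)
qed

lemma radial_vector_descends:
  fixes p xb c v :: "'a::real_inner"
  assumes g: "0 < g" "g < 1" and "p \<noteq> xb"
    and near: "norm (xb - c) \<le> g/8 * norm (p - xb)"
    and radial: "norm (p + v - xb) < g/8 * norm (p - xb)"
  shows "inner v (p - c) < - (1 - g) * norm v * norm (p - c)"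
proof (rule ccontr)
  assume "\<not> ?thesis"
  then have lower: "inner v (p - c) \<ge> - (1 - g) * norm v * norm (p - c)" by simp
  define A where "A = norm (p - xb)"
  define B where "B = norm (xb - c)"
  define w where "w = p + v - xb"
  have v_eq: "v = w - (p - xb)" unfolding w_def by simp
  have w: "norm w < g/8 * A" using radial unfolding w_def A_def .
  have "inner w ((p - xb) + (xb - c)) \<le> norm w * norm ((p - xb) + (xb - c))"
    by (rule norm_cauchy_schwarz)
  also have "\<dots> \<le> norm w * (A + B)"
    unfolding A_def B_def by (intro mult_left_mono norm_triangle_ineq) auto
  finally have "inner w ((p - xb) + (xb - c)) \<le> norm w * (A + B)" .
  moreover have "norm w * (A + B) \<le> g/8 * A * (A + B)"
    using w unfolding A_def B_def by (intro mult_right_mono) auto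
  moreover have "- inner (p - xb) (xb - c) \<le> A * B"
    using norm_cauchy_schwarz[of "p - xb" "c - xb"] unfolding A_def B_def
    by (simp add: inner_diff_right norm_minus_commute)
  moreover have "inner v (p - c) = inner w ((p - xb) + (xb - c)) - A\<^sup>2 - inner (p - xb) (xb - c)"
    unfolding v_eq A_def power2_norm_eq_inner by (simp add: inner_diff_left inner_add_right algebra_simps)
  ultimately have upper: "inner v (p - c) \<le> g/8 * A * (A + B) - A\<^sup>2 + A * B" by linarith
  have "norm v \<le> (1 + g/8) * A"
    using norm_triangle_ineq4[of w "p - xb"] w unfolding v_eq A_def by (simp add: algebra_simps)
  moreover have "norm (p - c) \<le> A + B"
    using norm_triangle_ineq[of "p - xb" "xb - c"] unfolding A_def B_def by simp
  moreover have "A > 0" using \<open>p \<noteq> xb\<close> unfolding A_def by simp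
  moreover have "B \<ge> 0" unfolding B_def by simp
  ultimately show False
    using radial_descent_arith[OF g _ _ near[folded A_def B_def] _ _ _ _ upper lower] by simp
qed

text \<open>A local minimiser p of the penalised
  distance max(|q - y'|, \<epsilon>) + (1-g)|q - z| on X, with y' much closer to xb than p is, already
  lies in B_\<epsilon>(y'): otherwise the nearly radial tangent vector at p would decrease the
  distance to y' faster than the penalty allows.\<close>
lemma penalised_minimiser_in_ball:
  fixes X :: "'a::euclidean_space set"
  assumes g: "0 < g" "g < 1"
    and rad: "\<forall>x\<in>X. x \<noteq> xb \<and> dist x xb < r \<longrightarrow>
      infdist xb ((+) x ` tangent_cone X x) < g/8 * norm (x - xb)"
    and p: "p \<in> X" "p \<noteq> xb" "dist p xb < r" and near: "norm (xb - y') \<le> g/8 * norm (p - xb)"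
    and \<rho>: "\<rho> > 0"
    and min: "\<And>q. q \<in> X \<Longrightarrow> dist q p < \<rho> \<Longrightarrow>
      max (norm (p - y')) \<epsilon> + (1 - g) * norm (p - z) \<le> max (norm (q - y')) \<epsilon> + (1 - g) * norm (q - z)"
  shows "norm (p - y') \<le> \<epsilon>"
proof (rule ccontr)
  assume far: "\<not> norm (p - y') \<le> \<epsilon>"
  have grow: "norm (p - y') - (1 - g) * norm (q - p) \<le> norm (q - y')"
    if q: "q \<in> X" "dist q p < min \<rho> (norm (p - y') - \<epsilon>)" for q
  proof -
    have "norm (p - y') \<le> norm (q - y') + norm (q - p)"
      using norm_triangle_ineq[of "q - y'" "p - q"] by (simp add: norm_minus_commute)
    then have "norm (q - y') > \<epsilon>" using q(2) by (simp add: dist_norm)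
    then have "norm (p - y') + (1 - g) * norm (p - z) \<le> norm (q - y') + (1 - g) * norm (q - z)"
      using min[OF q(1)] q(2) far by simp
    moreover have "(1 - g) * norm (q - z) \<le> (1 - g) * (norm (q - p) + norm (p - z))"
      using norm_triangle_ineq[of "q - p" "p - z"] g by (intro mult_left_mono) auto
    ultimately show ?thesis by (simp add: algebra_simps)
  qed
  have "(+) p ` tangent_cone X p \<noteq> {}" using zero_in_tangent_cone[OF p(1)] by blast
  moreover have "infdist xb ((+) p ` tangent_cone X p) < g/8 * norm (p - xb)" using rad p by blast
  ultimately obtain a where "a \<in> (+) p ` tangent_cone X p" "dist xb a < g/8 * norm (p - xb)"
    by (rule infdist_lessE)
  then obtain v where v: "v \<in> tangent_cone X p" "dist xb (p + v) < g/8 * norm (p - xb)"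
    by blast
  have "- (1 - g) * norm v * norm (p - y') \<le> inner v (p - y')"
    by (rule tangent_cone_distance_growth[where \<rho>="min \<rho> (norm (p - y') - \<epsilon>)", OF v(1) _ _ grow]) (use g \<rho> far in auto)
  moreover have "inner v (p - y') < - (1 - g) * norm v * norm (p - y')"
    using v(2) by (intro radial_vector_descends[OF g p(2) near]) (simp add: dist_norm norm_minus_commute)
  ultimately show False by simp
qed


lemma minimiser_location:
  fixes p z y y' xb :: "'a::real_normed_vector"
  assumes pz: "norm (p - z) \<le> (1 + \<eta>) * norm (y - y')" and \<eta>: "\<eta> > 0"
    and z: "norm (z - y) \<le> \<epsilon>" "\<epsilon> < norm (z - y')"
    and y: "dist y xb < d" "dist y' xb < d" and d: "d * (6 + 4 * \<eta>) \<le> \<epsilon>"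
  shows "\<epsilon> / 2 \<le> norm (p - xb)" "norm (p - xb) \<le> 3/2 * \<epsilon>"
proof -
  have "norm (y - y') < 2 * d"
    using y norm_triangle_ineq[of "y - xb" "xb - y'"] by (simp add: dist_norm norm_minus_commute)
  then have "(1 + \<eta>) * norm (y - y') \<le> (1 + \<eta>) * (2 * d)" using \<eta> by (intro mult_left_mono) auto
  then have pz': "norm (p - z) + d \<le> \<epsilon> / 2" using pz d by (simp add: algebra_simps)
  have "norm (z - y') \<le> norm (z - p) + norm (p - xb) + norm (xb - y')"
    using norm_triangle_ineq[of "z - p" "p - xb"] norm_triangle_ineq[of "z - p + (p - xb)" "xb - y'"]
    by simp
  then show "\<epsilon> / 2 \<le> norm (p - xb)"
    using z(2) y(2) pz' by (simp add: dist_norm norm_minus_commute)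
  have "norm (p - xb) \<le> norm (p - z) + norm (z - y) + norm (y - xb)"
    using norm_triangle_ineq[of "p - z" "z - y"] norm_triangle_ineq[of "p - z + (z - y)" "y - xb"]
    by simp
  then show "norm (p - xb) \<le> 3/2 * \<epsilon>"
    using z(1) y(1) pz' by (simp add: dist_norm)
qed

text \<open>The point is a minimiser of the penalised distance to y'.\<close>
lemma ball_selection:
  fixes X :: "'a::euclidean_space set"
  assumes X: "closed X" and \<eta>: "\<eta> > 0" and g: "g = \<eta> / (1 + \<eta>)"
    and rad: "\<forall>x\<in>X. x \<noteq> xb \<and> dist x xb < r \<longrightarrow>
      infdist xb ((+) x ` tangent_cone X x) < g/8 * norm (x - xb)"
    and \<epsilon>: "0 < \<epsilon>" "2 * \<epsilon> < r" and d: "d * (6 + 4 * \<eta>) \<le> \<epsilon>" "16 * d \<le> g * \<epsilon>"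
    and y: "dist y xb < d" "dist y' xb < d" and z: "z \<in> X" "norm (z - y) \<le> \<epsilon>"
  shows "\<exists>z'\<in>X. norm (z' - y') \<le> \<epsilon> \<and> norm (z - z') \<le> (1 + \<eta>) * norm (y - y')"
proof (cases "norm (z - y') \<le> \<epsilon>")
  case True
  then show ?thesis using z \<eta> by (intro bexI[of _ z]) auto
next
  case False
  define s where "s = norm (y - y')"
  define R where "R = 2 * (1 + \<eta>) * s"
  define h where "h q = max (norm (q - y')) \<epsilon> + (1 - g) * norm (q - z)" for q
  have g01: "0 < g" "g < 1" and penalty: "1 - g = 1 / (1 + \<eta>)"
    using \<eta> unfolding g by (auto simp: field_simps)
  have "s > 0" using False z(2) unfolding s_def by auto
  have "R \<ge> 0" using \<open>s > 0\<close> \<eta> unfolding R_def by simp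
  have "compact (X \<inter> cball z R)" using X by (intro closed_Int_compact) auto
  moreover have "z \<in> X \<inter> cball z R" using z(1) \<open>R \<ge> 0\<close> by simp
  moreover have "continuous_on (X \<inter> cball z R) h" unfolding h_def by (intro continuous_intros)
  ultimately obtain p where p: "p \<in> X" "norm (p - z) \<le> R"
    and p_min: "\<And>q. q \<in> X \<Longrightarrow> norm (q - z) \<le> R \<Longrightarrow> h p \<le> h q"
    by (metis IntD1 IntD2 IntI continuous_attains_inf empty_iff mem_cball dist_norm norm_minus_commute)
  have "h p \<le> \<epsilon> + s"
    using p_min[OF z(1)] \<open>R \<ge> 0\<close> False norm_triangle_ineq[of "z - y" "y - y'"] z(2)
    unfolding h_def s_def by simp
  then have "(1 - g) * norm (p - z) \<le> s" unfolding h_def by simp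
  then have pz: "norm (p - z) \<le> (1 + \<eta>) * s" using \<eta> unfolding penalty by (simp add: field_simps)
  have "\<epsilon> < norm (z - y')" using False by simp
  note loc = minimiser_location[OF pz[unfolded s_def] \<eta> z(2) this y d(1)]
  have "norm (p - y') \<le> \<epsilon>"
  proof (rule penalised_minimiser_in_ball[OF g01 rad p(1)])
    show "p \<noteq> xb" "dist p xb < r" using loc False \<epsilon> by (auto simp: dist_norm)
    have "g * \<epsilon> \<le> g * (2 * norm (p - xb))" using loc(1) g01 by (intro mult_left_mono) auto
    then show "norm (xb - y') \<le> g/8 * norm (p - xb)"
      using y(2) d(2) by (simp add: dist_norm norm_minus_commute)
    have "(1 + \<eta>) * s < R" using \<open>s > 0\<close> \<eta> unfolding R_def by simp
    then show "R - norm (p - z) > 0" using pz by simp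
    fix q assume "q \<in> X" "dist q p < R - norm (p - z)"
    moreover have "norm (q - z) \<le> norm (q - p) + norm (p - z)"
      using norm_triangle_ineq[of "q - p" "p - z"] by simp
    ultimately have "h p \<le> h q" by (intro p_min) (auto simp: dist_norm)
    then show "max (norm (p - y')) \<epsilon> + (1 - g) * norm (p - z)
        \<le> max (norm (q - y')) \<epsilon> + (1 - g) * norm (q - z)" unfolding h_def .
  qed
  then show ?thesis using p(1) pz unfolding s_def by (intro bexI[of _ p]) (auto simp: norm_minus_commute)
qed


lemma nearly_radial_lip_bound:
  fixes X :: "'a::euclidean_space set"
  assumes X: "closed X" and nr: "nearly_radial X xb" and \<eta>: "\<eta> > 0"
  shows "\<exists>\<epsilon>0>0. \<forall>\<epsilon>. 0 < \<epsilon> \<and> \<epsilon> < \<epsilon>0 \<longrightarrow> lip_mod (Phi X \<epsilon>) Y xb \<le> ereal (1 + \<eta>)"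
proof -
  define g where "g = \<eta> / (1 + \<eta>)"
  have "g > 0" unfolding g_def using \<eta> by simp
  then have "g/8 > 0" by simp
  then obtain r where r: "r > 0" and rad: "\<forall>x\<in>X. x \<noteq> xb \<and> dist x xb < r \<longrightarrow>
      infdist xb ((+) x ` tangent_cone X x) < g/8 * norm (x - xb)"
    using nr[unfolded nearly_radial_iff] by blast
  have "lip_mod (Phi X \<epsilon>) Y xb \<le> ereal (1 + \<eta>)" if \<epsilon>: "0 < \<epsilon>" "\<epsilon> < r / 2" for \<epsilon>
  proof -
    define \<kappa> where "\<kappa> = min (1 / (6 + 4 * \<eta>)) (g / 16)"
    define d where "d = \<epsilon> * \<kappa>"
    have "\<kappa> > 0" using \<eta> \<open>g > 0\<close> unfolding \<kappa>_def by simp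
    have "\<kappa> * (6 + 4 * \<eta>) \<le> 1 / (6 + 4 * \<eta>) * (6 + 4 * \<eta>)"
      using \<eta> unfolding \<kappa>_def by (intro mult_right_mono) auto
    then have "\<epsilon> * (\<kappa> * (6 + 4 * \<eta>)) \<le> \<epsilon>" using \<epsilon> \<eta> by (simp add: mult_le_cancel_left1)
    moreover have "\<epsilon> * (16 * \<kappa>) \<le> \<epsilon> * g" using \<epsilon> unfolding \<kappa>_def by (intro mult_left_mono) auto
    ultimately have d: "d > 0" "d * (6 + 4 * \<eta>) \<le> \<epsilon>" "16 * d \<le> g * \<epsilon>"
      using \<epsilon> \<open>\<kappa> > 0\<close> unfolding d_def by (auto simp: ac_simps)
    have select: "\<forall>c\<in>Phi X \<epsilon> y. \<exists>c'\<in>Phi X \<epsilon> y'. norm (c - c') \<le> (1 + \<eta>) * dist y y'"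
      if y: "dist y xb < d" "dist y' xb < d" for y y'
    proof
      fix c assume "c \<in> Phi X \<epsilon> y"
      then have c: "c \<in> X" "norm (c - y) \<le> \<epsilon>"
        unfolding Phi_def by (auto simp: dist_norm norm_minus_commute)
      have "0 < \<epsilon>" "2 * \<epsilon> < r" using \<epsilon> by auto
      from ball_selection[OF X \<eta> g_def rad this d(2,3) y c] obtain c' where
        "c' \<in> X" "norm (c' - y') \<le> \<epsilon>" "norm (c - c') \<le> (1 + \<eta>) * norm (y - y')"
        by blast
      then show "\<exists>c'\<in>Phi X \<epsilon> y'. norm (c - c') \<le> (1 + \<eta>) * dist y y'"
        unfolding Phi_def by (intro bexI[of _ c']) (auto simp: dist_norm norm_minus_commute)
    qed
    show ?thesis
    proof (rule lip_mod_le[OF d(1)])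
      fix y y' assume y: "dist y xb < d" "dist y' xb < d"
      show "ph_dist (Phi X \<epsilon> y') (Phi X \<epsilon> y) \<le> ereal ((1 + \<eta>) * dist y' y)"
      proof (rule ph_dist_le)
        show "\<forall>c\<in>Phi X \<epsilon> y'. \<exists>c'\<in>Phi X \<epsilon> y. norm (c - c') \<le> (1 + \<eta>) * dist y' y"
          using select[OF y(2,1)] .
        show "\<forall>c\<in>Phi X \<epsilon> y. \<exists>c'\<in>Phi X \<epsilon> y'. norm (c - c') \<le> (1 + \<eta>) * dist y' y"
          using select[OF y] by (simp add: dist_commute)
      qed (use \<eta> in simp)
    qed (use \<eta> in simp)
  qed
  then show ?thesis using r by (intro exI[of _ "r / 2"]) auto
qed

lemma nearly_radial_imp_one_peaceful:
  fixes X :: "'a::euclidean_space set"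
  assumes X: "closed X" and nr: "nearly_radial X xb"
  shows "one_peaceful X xb"
  unfolding one_peaceful_def
proof
  obtain \<epsilon>0 where \<epsilon>0: "\<epsilon>0 > 0"
    and bound: "\<And>\<epsilon>. 0 < \<epsilon> \<and> \<epsilon> < \<epsilon>0 \<Longrightarrow> lip_mod (Phi X \<epsilon>) X xb \<le> ereal (1 + 1)"
    using nearly_radial_lip_bound[OF X nr, of 1 X] by auto
  show "\<forall>\<^sub>F \<epsilon> in at_right 0. lip_mod (Phi X \<epsilon>) X xb < \<infinity>"
    unfolding eventually_at_right_field
  proof (intro exI[of _ \<epsilon>0] conjI allI impI)
    fix \<epsilon> :: real assume "0 < \<epsilon>" "\<epsilon> < \<epsilon>0"
    then have "lip_mod (Phi X \<epsilon>) X xb \<le> ereal (1 + 1)" using bound by simp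
    then show "lip_mod (Phi X \<epsilon>) X xb < \<infinity>" by (rule order.strict_trans1) simp
  qed (use \<epsilon>0 in simp)
  show "Limsup (at_right 0) (\<lambda>\<epsilon>. lip_mod (Phi X \<epsilon>) UNIV xb) \<le> 1"
    unfolding Limsup_le_iff
  proof (intro allI impI)
    fix c :: ereal assume "c > 1"
    then obtain L where L: "1 < ereal L" "ereal L < c" using ereal_dense2 by blast
    obtain \<epsilon>0 where "\<epsilon>0 > 0"
      "\<And>\<epsilon>. 0 < \<epsilon> \<and> \<epsilon> < \<epsilon>0 \<Longrightarrow> lip_mod (Phi X \<epsilon>) UNIV xb \<le> ereal (1 + (L - 1))"
      using nearly_radial_lip_bound[OF X nr, of "L - 1" UNIV] L by auto
    then show "\<forall>\<^sub>F \<epsilon> in at_right 0. lip_mod (Phi X \<epsilon>) UNIV xb < c"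
      unfolding eventually_at_right_field using L by (auto intro: le_less_trans)
  qed
qed


subsection \<open>1-peaceful implies nearly radial\<close>

lemma ray_approximation_tangent:
  fixes X :: "'a::euclidean_space set"
  assumes x: "x \<in> X" "x \<noteq> xb" and d: "d > 0"
    and approx: "\<And>s. 0 < s \<Longrightarrow> s < d \<Longrightarrow> \<exists>z\<in>X.
      norm (z - (xb - (s / norm (x - xb)) *\<^sub>R (x - xb))) \<le> norm (x - xb) \<and> norm (x - z) \<le> L * s"
  shows "\<exists>v\<in>tangent_cone X x. (norm ((x - xb) + v))\<^sup>2 \<le> (L\<^sup>2 - 1) * (norm (x - xb))\<^sup>2"
proof -
  define w where "w = x - xb"
  define e where "e = norm w"
  have e: "e > 0" using x(2) unfolding e_def w_def by simp
  define t where "t k = (d / (2 * e)) / real (Suc k)" for k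
  have t: "t k > 0" "e * t k < d" for k
  proof -
    show "t k > 0" using d e unfolding t_def by (intro divide_pos_pos) auto
    have "e * t k = d / (2 * real (Suc k))" using e by (simp add: t_def)
    also have "\<dots> \<le> d / 2" using d by (intro divide_left_mono) auto
    finally show "e * t k < d" using d by simp
  qed
  have "t \<longlonglongrightarrow> 0"
    unfolding t_def using LIMSEQ_Suc[OF lim_const_over_n[of "d / (2 * e)"]] by simp
  have "\<forall>k. \<exists>z\<in>X. norm (z - (xb - t k *\<^sub>R w)) \<le> e \<and> norm (x - z) \<le> L * (e * t k)"
    using approx[OF mult_pos_pos[OF e t(1)] t(2)] e unfolding w_def e_def by simp
  then obtain z where z: "\<And>k. z k \<in> X" "\<And>k. norm (z k - (xb - t k *\<^sub>R w)) \<le> e"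
    "\<And>k. norm (z k - x) \<le> (L * e) * t k"
    by (metis mult.assoc norm_minus_commute)
  define q where "q k = (1 / t k) *\<^sub>R (z k - x)" for k
  have z_eq: "z k - (xb - t k *\<^sub>R w) = t k *\<^sub>R q k + (1 + t k) *\<^sub>R w" for k
    using t(1)[of k] unfolding q_def w_def by (simp add: algebra_simps)
  text \<open>Squaring the first estimate and dividing by t_k.\<close>
  have ineq: "(2 + t k) * e\<^sup>2 + 2 * (1 + t k) * inner w (q k) + t k * (norm (q k))\<^sup>2 \<le> 0" for k
  proof -
    have "(norm (t k *\<^sub>R q k + (1 + t k) *\<^sub>R w))\<^sup>2 \<le> e\<^sup>2"
      using z(2)[of k] unfolding z_eq by (intro power_mono) auto
    moreover have "(norm (t k *\<^sub>R q k + (1 + t k) *\<^sub>R w))\<^sup>2 =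
       (t k)\<^sup>2 * (norm (q k))\<^sup>2 + 2 * t k * (1 + t k) * inner w (q k) + (1 + t k)\<^sup>2 * e\<^sup>2"
      unfolding e_def power2_norm_eq_inner
      by (simp add: inner_add_left inner_add_right inner_commute algebra_simps power2_eq_square)
    ultimately have "t k * ((2 + t k) * e\<^sup>2 + 2 * (1 + t k) * inner w (q k) + t k * (norm (q k))\<^sup>2) \<le> 0"
      by (simp add: algebra_simps power2_eq_square)
    then show ?thesis using t(1)[of k] by (simp add: mult_le_0_iff)
  qed
  have q_bound: "norm (q k) \<le> L * e" for k
    using z(3)[of k] t(1)[of k] unfolding q_def by (simp add: divide_le_eq mult.commute)
  obtain r v where r: "strict_mono r" and v: "v \<in> tangent_cone X x" and qr: "(q \<circ> r) \<longlonglongrightarrow> v"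
    using tangent_cone_bounded_quotients[OF t(1) \<open>t \<longlonglongrightarrow> 0\<close> z(1) z(3)]
    unfolding q_def comp_def by metis
  have tr: "(t \<circ> r) \<longlonglongrightarrow> 0" using LIMSEQ_subseq_LIMSEQ[OF \<open>t \<longlonglongrightarrow> 0\<close> r] .
  have "norm v \<le> L * e"
    using tendsto_norm[OF qr] q_bound
    by (intro tendsto_le[OF trivial_limit_sequentially tendsto_const]) auto
  moreover have "2 * e\<^sup>2 + 2 * inner w v \<le> 0"
  proof -
    have "(\<lambda>k. (2 + (t \<circ> r) k) * e\<^sup>2 + 2 * (1 + (t \<circ> r) k) * inner w ((q \<circ> r) k)
        + (t \<circ> r) k * (norm ((q \<circ> r) k))\<^sup>2) \<longlonglongrightarrow> (2 + 0) * e\<^sup>2 + 2 * (1 + 0) * inner w v + 0 * (norm v)\<^sup>2"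
      by (intro tendsto_intros tr qr)
    then show ?thesis using ineq
      by (intro tendsto_le[OF trivial_limit_sequentially tendsto_const]) auto
  qed
  moreover have "(norm (w + v))\<^sup>2 = e\<^sup>2 + 2 * inner w v + (norm v)\<^sup>2"
    unfolding e_def power2_norm_eq_inner by (simp add: inner_add_left inner_add_right inner_commute)
  ultimately have "(norm (w + v))\<^sup>2 \<le> (L\<^sup>2 - 1) * e\<^sup>2"
    using power_mono[of "norm v" "L * e" 2] by (simp add: algebra_simps power_mult_distrib)
  then show ?thesis using v unfolding w_def e_def by blast
qed

text \<open>A Lipschitz bound L for \<Phi>_\<epsilon> on all of the ambient space, with \<epsilon> = |x - xb|, provides the
  ray approximations required above: \<Phi>_\<epsilon>(xb) contains x, so \<Phi>_\<epsilon>(y_s) contains a point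
  within L |y_s - xb| = L s of x.\<close>
lemma lip_bound_ray_approximation:
  fixes X :: "'a::euclidean_space set"
  assumes lip: "lip_mod (Phi X (norm (x - xb))) UNIV xb < ereal L" and x: "x \<in> X" "x \<noteq> xb"
  shows "\<exists>d>0. \<forall>s. 0 < s \<longrightarrow> s < d \<longrightarrow> (\<exists>z\<in>X.
      norm (z - (xb - (s / norm (x - xb)) *\<^sub>R (x - xb))) \<le> norm (x - xb) \<and> norm (x - z) \<le> L * s)"
proof -
  define \<epsilon> where "\<epsilon> = norm (x - xb)"
  have "\<epsilon> > 0" using x(2) unfolding \<epsilon>_def by simp
  obtain d where d: "d > 0" and lip_d: "\<And>y y'. y \<noteq> y' \<Longrightarrow> dist y xb < d \<Longrightarrow> dist y' xb < d \<Longrightarrow>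
      ph_dist (Phi X \<epsilon> y') (Phi X \<epsilon> y) < ereal (L * dist y' y)"
    using lip_mod_lessD[OF lip[folded \<epsilon>_def]] by blast
  have "\<exists>z\<in>X. norm (z - (xb - (s / \<epsilon>) *\<^sub>R (x - xb))) \<le> \<epsilon> \<and> norm (x - z) \<le> L * s"
    if s: "0 < s" "s < d" for s
  proof -
    define y where "y = xb - (s / \<epsilon>) *\<^sub>R (x - xb)"
    have dy: "dist xb y = s" unfolding y_def dist_norm \<epsilon>_def using \<open>\<epsilon> > 0\<close> s by (simp add: \<epsilon>_def)
    then have "ph_dist (Phi X \<epsilon> xb) (Phi X \<epsilon> y) < ereal (L * s)"
      using lip_d[of y xb] s d by (auto simp: dist_commute)
    then obtain \<eta> where \<eta>: "\<eta> < L * s" "\<forall>c\<in>Phi X \<epsilon> xb. \<exists>c'\<in>Phi X \<epsilon> y. norm (c - c') \<le> \<eta>"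
      by (blast dest: ph_dist_lessD)
    have "x \<in> Phi X \<epsilon> xb" unfolding Phi_def \<epsilon>_def using x(1) by (simp add: dist_norm norm_minus_commute)
    then obtain z where "z \<in> Phi X \<epsilon> y" "norm (x - z) \<le> \<eta>" using \<eta>(2) by blast
    then show ?thesis using \<eta>(1) unfolding Phi_def y_def
      by (intro bexI[of _ z]) (auto simp: dist_norm norm_minus_commute)
  qed
  then show ?thesis using d unfolding \<epsilon>_def by blast
qed

lemma limsup_lip_imp_nearly_radial:
  fixes X :: "'a::euclidean_space set"
  assumes lim: "Limsup (at_right 0) (\<lambda>\<epsilon>. lip_mod (Phi X \<epsilon>) UNIV xb) \<le> 1"
  shows "nearly_radial X xb"
  unfolding nearly_radial_iff
proof (intro allI impI)
  fix c :: real assume "c > 0"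
  define m where "m = min 1 (c\<^sup>2 / 4)"
  define L where "L = 1 + m"
  have m: "0 < m" "m \<le> 1" "m \<le> c\<^sup>2 / 4" using \<open>c > 0\<close> unfolding m_def by auto
  have L: "L > 1" "L\<^sup>2 - 1 < c\<^sup>2"
  proof -
    show "L > 1" using m unfolding L_def by simp
    have "m * m \<le> m" using m by (intro mult_left_le_one_le) auto
    then have "L\<^sup>2 - 1 \<le> 3 * m" unfolding L_def power2_eq_square by (simp add: algebra_simps)
    then show "L\<^sup>2 - 1 < c\<^sup>2" using m \<open>c > 0\<close> by simp
  qed
  have "Limsup (at_right 0) (\<lambda>\<epsilon>. lip_mod (Phi X \<epsilon>) UNIV xb) < ereal L"
    using lim L(1) by (simp add: order.strict_trans1)
  from Limsup_lessD[OF this] obtain b where b: "b > 0"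
    "\<And>\<epsilon>. 0 < \<epsilon> \<Longrightarrow> \<epsilon> < b \<Longrightarrow> lip_mod (Phi X \<epsilon>) UNIV xb < ereal L"
    unfolding eventually_at_right_field by auto
  have "infdist xb ((+) x ` tangent_cone X x) < c * norm (x - xb)"
    if x: "x \<in> X" "x \<noteq> xb" "dist x xb < b" for x
  proof -
    have "lip_mod (Phi X (norm (x - xb))) UNIV xb < ereal L"
      using b(2) x by (simp add: dist_norm)
    from lip_bound_ray_approximation[OF this x(1,2)] obtain d where
      "d > 0" "\<And>s. 0 < s \<Longrightarrow> s < d \<Longrightarrow> \<exists>z\<in>X.
        norm (z - (xb - (s / norm (x - xb)) *\<^sub>R (x - xb))) \<le> norm (x - xb) \<and> norm (x - z) \<le> L * s"
      by blast
    from ray_approximation_tangent[OF x(1,2) this] obtain v where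
      v: "v \<in> tangent_cone X x" "(norm ((x - xb) + v))\<^sup>2 \<le> (L\<^sup>2 - 1) * (norm (x - xb))\<^sup>2"
      by blast
    have "(L\<^sup>2 - 1) * (norm (x - xb))\<^sup>2 < c\<^sup>2 * (norm (x - xb))\<^sup>2"
      using L(2) x(2) by (intro mult_strict_right_mono) auto
    then have "(norm ((x - xb) + v))\<^sup>2 < (c * norm (x - xb))\<^sup>2"
      using v(2) by (simp add: power_mult_distrib)
    then have "norm ((x - xb) + v) < c * norm (x - xb)"
      by (rule power_less_imp_less_base) (use \<open>c > 0\<close> in simp)
    moreover have "infdist xb ((+) x ` tangent_cone X x) \<le> norm ((x - xb) + v)"
      using infdist_le[of "x + v" "(+) x ` tangent_cone X x" xb] v(1)
      by (simp add: dist_norm norm_minus_commute algebra_simps)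
    ultimately show ?thesis by linarith
  qed
  then show "\<exists>r>0. \<forall>x\<in>X. x \<noteq> xb \<and> dist x xb < r \<longrightarrow>
      infdist xb ((+) x ` tangent_cone X x) < c * norm (x - xb)"
    using b(1) by blast
qed


theorem theorem7p3:
  fixes X :: "'a::euclidean_space set" and xb :: 'a
  assumes "closed X" and "xb \<in> X"
  shows "(nearly_radial X xb \<longrightarrow> one_peaceful X xb) \<and>
         (((\<exists>d>0. \<forall>y\<in>X \<inter> ball xb d. normal_cone X y = regular_normal_cone X y)
            \<and> one_peaceful X xb) \<longrightarrow> nearly_radial X xb)"
proof (intro conjI impI)
  assume "nearly_radial X xb"
  then show "one_peaceful X xb" by (rule nearly_radial_imp_one_peaceful[OF assms(1)])
next
  assume "(\<exists>d>0. \<forall>y\<in>X \<inter> ball xb d. normal_cone X y = regular_normal_cone X y) \<and> one_peaceful X xb"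
  then have "Limsup (at_right 0) (\<lambda>\<epsilon>. lip_mod (Phi X \<epsilon>) UNIV xb) \<le> 1"
    unfolding one_peaceful_def by blast
  then show "nearly_radial X xb" by (rule limsup_lip_imp_nearly_radial)
qed

end
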